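(* Let $f_1,\dots,f_n:\mathbb{R}^d\to\mathbb{R}$ satisfy Assumptions A1 and A2. Then the map $x^*:\Delta^{n-1}\to\mathbb{R}^d$, $x^*(\beta)=\operatorname{argmin}_x f_\beta(x)$, is $M_0$-Lipschitz continuous and has $M_1$-Lipschitz continuous gradients, where \[M_0:=\kappa R\qquad\text{and}\qquad M_1:=2\kappa^2R\left(1+\frac{L_HR}{\mu}\right).\]
   Context: Assumption A1: each $f_i$ is twice differentiable with $\mu\mathbf{I}\preceq\nabla^2 f_i(x)\preceq L\mathbf{I}$ for all $x$, $0<\mu\le L$; $\kappa:=L/\mu$. Assumption A2: $\|\nabla^2 f_i(x)-\nabla^2 f_i(y)\|_2\le L_H\|x-y\|_2$ for all $x,y$ and all $i$. $f_\beta:=\sum_i\beta_if_i$ for $\beta$ in the simplex $\Delta^{n-1}$. $\mathrm{Pareto}(F)$ is the set of Pareto optimal points of $F=(f_1,\dots,f_n)$ (equivalently, under A1, points $x$ with $\nabla f_\beta(x)=0$ for some $\beta\in\Delta^{n-1}$), and $R$ is its diameter in $\ell_2$. The simplex $\Delta^{n-1}$ carries the $\ell_1$ metric and $\mathbb{R}^d$ the $\ell_2$ metric; Lipschitz continuity of $\nabla x^*$ is measured in the operator norm $\|A\|_{1,2}:=\sup_{\|z\|_1=1}\|Az\|_2$. *)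

theory Defs
  imports "HOL-Analysis.Analysis"
begin

text \<open>Objectives are indexed by a finite type 'n (so n = CARD('n)), points live in real^'d.\<close>

definition l1norm :: "real^'n \<Rightarrow> real" where
  "l1norm z = (\<Sum>i\<in>UNIV. \<bar>z $ i\<bar>)"

definition std_simplex :: "(real^'n) set" where
  "std_simplex = {\<beta>. (\<forall>i. 0 \<le> \<beta> $ i) \<and> (\<Sum>i\<in>UNIV. \<beta> $ i) = 1}"

text \<open>Nonnegative orthant without the origin: the natural open-cone domain of x* containing the std_simplex,
 used to speak of the (unique) derivative of x* at points of the std_simplex.\<close>
definition posorth :: "(real^'n) set" where
  "posorth = {\<beta>. (\<forall>i. 0 \<le> \<beta> $ i)} - {0}"

definition fbeta :: "('n \<Rightarrow> real^'d \<Rightarrow> real) \<Rightarrow> real^'n \<Rightarrow> real^'d \<Rightarrow> real" where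
  "fbeta f \<beta> x = (\<Sum>i\<in>UNIV. \<beta> $ i * f i x)"

definition xstar :: "('n \<Rightarrow> real^'d \<Rightarrow> real) \<Rightarrow> real^'n \<Rightarrow> real^'d" where
  "xstar f \<beta> = (THE x. \<forall>y. fbeta f \<beta> x \<le> fbeta f \<beta> y)"

definition pareto_optimal :: "('n \<Rightarrow> real^'d \<Rightarrow> real) \<Rightarrow> real^'d \<Rightarrow> bool" where
  "pareto_optimal f x \<longleftrightarrow> \<not> (\<exists>y. (\<forall>i. f i y \<le> f i x) \<and> (\<exists>i. f i y < f i x))"

definition pareto_set :: "('n \<Rightarrow> real^'d \<Rightarrow> real) \<Rightarrow> (real^'d) set" where
  "pareto_set f = {x. pareto_optimal f x}"

definition op_norm_12 :: "real^'n^'d \<Rightarrow> real" where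
  "op_norm_12 A = Sup {norm (A *v z) | z. l1norm z = 1}"

end

theory Submission
  imports Defs
begin

text \<open>
  For \<beta> in the simplex, f_\<beta> is \<mu>-strongly convex, so x*(\<beta>) is its unique stationary point.
  Since \<nabla>f_\<beta>1 and \<nabla>f_(\<beta>1 - \<beta>2) agree at x*(\<beta>2), strong monotonicity of \<nabla>f_\<beta>1 gives
  \<mu> |x*(\<beta>1) - x*(\<beta>2)| \<le> |\<beta>1 - \<beta>2|_1 max_i |\<nabla>f_i(x*(\<beta>2))|, and |\<nabla>f_i(x*(\<beta>))| \<le> L R because
  \<nabla>f_i is L-Lipschitz and vanishes at the Pareto point x*(e_i), which lies within R of x*(\<beta>).
  Differentiating \<nabla>f_\<beta>(x*(\<beta>)) = 0 gives Dx*(\<beta>) = - (\<nabla>^2 f_\<beta>(x*(\<beta>)))^-1 [\<nabla>f_1 ... \<nabla>f_n](x*(\<beta>));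
  comparing these linear systems at \<beta>1 and \<beta>2, with the Lipschitz bounds on x* and on the
  Hessians, bounds Dx*(\<beta>1) - Dx*(\<beta>2).  The estimate |\<nabla>^2 f_i| \<le> L behind all of this needs the
  Hessians to be symmetric, which follows from their Lipschitz continuity.
\<close>

section \<open>Strong convexity and second-order Taylor estimates\<close>

lemma derivative_strongly_monotone:
  fixes g :: "'a::real_inner \<Rightarrow> 'a"
  assumes deriv: "\<And>x. (g has_derivative H x) (at x)"
    and coercive: "\<And>x v. m * (norm v)\<^sup>2 \<le> v \<bullet> H x v"
  shows "m * (norm (x - y))\<^sup>2 \<le> (g x - g y) \<bullet> (x - y)"
proof -
  define p where "p t = y + t *\<^sub>R (x - y)" for t :: real
  have "((\<lambda>t. g (p t) \<bullet> (x - y)) has_derivative (\<lambda>s. H (p t) (s *\<^sub>R (x - y)) \<bullet> (x - y)))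
      (at t within {0..1})" for t
  proof -
    have "(p has_derivative (\<lambda>s. s *\<^sub>R (x - y))) (at t within {0..1})"
      unfolding p_def by (auto intro!: derivative_eq_intros)
    from has_derivative_compose[OF this deriv] show ?thesis
      by (auto intro!: derivative_eq_intros)
  qed
  from mvt_very_simple[OF _ this]
  obtain t where "g (p 1) \<bullet> (x - y) - g (p 0) \<bullet> (x - y) = (x - y) \<bullet> H (p t) (x - y)"
    by (force simp: inner_commute)
  with coercive[where x = "p t" and v = "x - y"] show ?thesis
    by (simp add: p_def inner_diff_left)
qed

lemma quadratic_lower_bound:
  fixes F :: "'a::real_inner \<Rightarrow> real"
  assumes F: "\<And>x. (F has_derivative (\<lambda>h. g x \<bullet> h)) (at x)"
    and g: "\<And>x. (g has_derivative H x) (at x)"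
    and coercive: "\<And>x v. m * (norm v)\<^sup>2 \<le> v \<bullet> H x v"
  shows "F a + g a \<bullet> (x - a) + m / 2 * (norm (x - a))\<^sup>2 \<le> F x"
proof -
  define \<psi> where "\<psi> t = F (a + t *\<^sub>R (x - a)) - t * (g a \<bullet> (x - a)) - m / 2 * t\<^sup>2 * (norm (x - a))\<^sup>2"
    for t :: real
  have "(\<psi> has_derivative (\<lambda>s. s * ((g (a + t *\<^sub>R (x - a)) - g a) \<bullet> (x - a) - m * t * (norm (x - a))\<^sup>2)))
      (at t within {0..1})" for t
  proof -
    have "((\<lambda>t. a + t *\<^sub>R (x - a)) has_derivative (\<lambda>s. s *\<^sub>R (x - a))) (at t within {0..1})"
      by (auto intro!: derivative_eq_intros)
    from has_derivative_compose[OF this F] show ?thesis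
      unfolding \<psi>_def by (auto intro!: derivative_eq_intros simp: algebra_simps)
  qed
  from mvt_very_simple[OF _ this] obtain t where t: "t \<in> {0..1}"
    and mvt: "\<psi> 1 - \<psi> 0 = (g (a + t *\<^sub>R (x - a)) - g a) \<bullet> (x - a) - m * t * (norm (x - a))\<^sup>2"
    by force
  have "m * (norm (t *\<^sub>R (x - a)))\<^sup>2 \<le> (g (a + t *\<^sub>R (x - a)) - g a) \<bullet> (t *\<^sub>R (x - a))"
    using derivative_strongly_monotone[OF g coercive, of "a + t *\<^sub>R (x - a)" a] by simp
  then have "t * (m * t * (norm (x - a))\<^sup>2) \<le> t * ((g (a + t *\<^sub>R (x - a)) - g a) \<bullet> (x - a))"
    by (simp add: power2_eq_square mult_ac)
  then have "0 \<le> \<psi> 1 - \<psi> 0"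
    using t mvt by (cases "t = 0") (auto simp: mult_le_cancel_left)
  then show ?thesis
    by (simp add: \<psi>_def)
qed

lemma norm_le_of_quadratic_growth:
  fixes F :: "'a::real_inner \<Rightarrow> real"
  assumes "0 < m"
    and growth: "F a + g \<bullet> (x - a) + m / 2 * (norm (x - a))\<^sup>2 \<le> F x"
    and "F x \<le> F a"
  shows "norm (x - a) \<le> 2 * norm g / m"
proof -
  have "m / 2 * norm (x - a) * norm (x - a) \<le> norm g * norm (x - a)"
    using assms Cauchy_Schwarz_ineq2[of g "x - a"] by (simp add: power2_eq_square)
  then have "m / 2 * norm (x - a) \<le> norm g"
    by (cases "x = a") auto
  with \<open>0 < m\<close> show ?thesis
    by (simp add: field_simps)
qed

lemma norm_linearization_error_le:
  fixes g :: "'a::real_normed_vector \<Rightarrow> 'b::real_normed_vector"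
  assumes deriv: "\<And>x. (g has_derivative H x) (at x)"
    and lipschitz: "\<And>z. onorm (\<lambda>v. H z v - H x v) \<le> B * norm (z - x)"
    and "0 \<le> B"
  shows "norm (g y - g x - H x (y - x)) \<le> B * (norm (y - x))\<^sup>2"
proof -
  have "norm (g y - g x - H x (y - x)) \<le> norm (y - x) * (B * norm (y - x))"
  proof (rule differentiable_bound_linearization[where S = "closed_segment x y"])
    show "x + t *\<^sub>R (y - x) \<in> closed_segment x y" if "t \<in> {0..1}" for t
      using that by (auto simp: closed_segment_def algebra_simps intro!: exI[of _ t])
    show "(g has_derivative H z) (at z within closed_segment x y)" for z
      using deriv has_derivative_at_withinI by blast
    show "onorm (H z - H x) \<le> B * norm (y - x)" if "z \<in> closed_segment x y" for z
      using lipschitz[of z] segment_bound1[OF that] \<open>0 \<le> B\<close>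
      by (simp add: fun_diff_def) (meson mult_left_mono order_trans)
  qed simp
  then show ?thesis
    by (simp add: power2_eq_square algebra_simps)
qed

lemma norm_second_difference_le:
  fixes g :: "'a::real_normed_vector \<Rightarrow> 'b::real_normed_vector"
  assumes g: "\<And>x. (g has_derivative H x) (at x)"
    and lipschitz: "\<And>x y. onorm (\<lambda>v. H x v - H y v) \<le> K * norm (x - y)"
    and "0 \<le> K"
  shows "norm ((g (y + b) - g y) - (g (x + b) - g x)) \<le> K * (2 * (norm b)\<^sup>2 + norm (y - x) * norm b)"
proof -
  have taylor: "norm (g (z + b) - g z - H z b) \<le> K * (norm b)\<^sup>2" for z
    using norm_linearization_error_le[OF g lipschitz \<open>0 \<le> K\<close>, where x = z and y = "z + b"] by simp
  have "bounded_linear (\<lambda>v. H y v - H x v)"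
    using g has_derivative_bounded_linear by (blast intro: bounded_linear_sub)
  from onorm[OF this, of b] have "norm (H y b - H x b) \<le> K * norm (y - x) * norm b"
    using lipschitz[of y x] by (meson mult_right_mono norm_ge_zero order_trans)
  moreover have "(g (y + b) - g y) - (g (x + b) - g x)
      = (g (y + b) - g y - H y b) - (g (x + b) - g x - H x b) + (H y b - H x b)"
    by simp
  ultimately show ?thesis
    using taylor[of y] taylor[of x] norm_triangle_ineq4 norm_triangle_ineq
    by (smt (verit) distrib_left mult.assoc)
qed

lemma second_difference_approx:
  fixes F :: "'a::real_inner \<Rightarrow> real"
  assumes F: "\<And>x. (F has_derivative (\<lambda>h. g x \<bullet> h)) (at x)"
    and g: "\<And>x. (g has_derivative H x) (at x)"
    and lipschitz: "\<And>x y. onorm (\<lambda>v. H x v - H y v) \<le> K * norm (x - y)"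
    and "0 \<le> K"
  shows "\<bar>F (x + a + b) - F (x + a) - F (x + b) + F x - a \<bullet> H x b\<bar>
    \<le> K * norm a * (3 * (norm b)\<^sup>2 + norm a * norm b)"
proof -
  define \<psi> where "\<psi> y = F (y + b) - F y" for y
  have "norm (\<psi> (x + a) - \<psi> x - (g (x + b) - g x) \<bullet> ((x + a) - x))
    \<le> norm ((x + a) - x) * (K * (2 * (norm b)\<^sup>2 + norm a * norm b))"
  proof (rule differentiable_bound_linearization[where S = "closed_segment x (x + a)"
        and f' = "\<lambda>y h. (g (y + b) - g y) \<bullet> h"])
    show "x + t *\<^sub>R ((x + a) - x) \<in> closed_segment x (x + a)" if "t \<in> {0..1}" for t
      using that by (auto simp: closed_segment_def algebra_simps intro!: exI[of _ t])
    show "(\<psi> has_derivative (\<lambda>h. (g (y + b) - g y) \<bullet> h)) (at y within closed_segment x (x + a))" for y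
    proof -
      have "((\<lambda>y. y + b) has_derivative (\<lambda>h. h)) (at y)"
        by (auto intro!: derivative_eq_intros)
      from has_derivative_compose[OF this F]
      have "((\<lambda>y. F (y + b)) has_derivative (\<lambda>h. g (y + b) \<bullet> h)) (at y)"
        by simp
      from has_derivative_diff[OF this F]
      show ?thesis
        unfolding \<psi>_def by (simp add: inner_diff_left has_derivative_at_withinI)
    qed
    show "onorm ((\<lambda>h. (g (y + b) - g y) \<bullet> h) - (\<lambda>h. (g (x + b) - g x) \<bullet> h))
        \<le> K * (2 * (norm b)\<^sup>2 + norm a * norm b)" if "y \<in> closed_segment x (x + a)" for y
    proof -
      define w where "w = (g (y + b) - g y) - (g (x + b) - g x)"
      have "(\<lambda>h. (g (y + b) - g y) \<bullet> h) - (\<lambda>h. (g (x + b) - g x) \<bullet> h) = (\<lambda>h. w \<bullet> h)"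
        by (auto simp: w_def inner_diff_left)
      moreover have "onorm (\<lambda>h. w \<bullet> h) \<le> norm w"
        by (rule onorm_bound) (simp_all add: Cauchy_Schwarz_ineq2)
      moreover have "norm w \<le> K * (2 * (norm b)\<^sup>2 + norm (y - x) * norm b)"
        unfolding w_def by (rule norm_second_difference_le[OF g lipschitz \<open>0 \<le> K\<close>])
      moreover have "\<dots> \<le> K * (2 * (norm b)\<^sup>2 + norm a * norm b)"
        using segment_bound1[OF that] \<open>0 \<le> K\<close>
        by (intro mult_left_mono add_left_mono mult_right_mono) auto
      ultimately show ?thesis
        by simp
    qed
  qed simp
  moreover have "\<bar>(g (x + b) - g x) \<bullet> a - a \<bullet> H x b\<bar> \<le> norm a * (K * (norm b)\<^sup>2)"
  proof -
    have "\<bar>(g (x + b) - g x) \<bullet> a - a \<bullet> H x b\<bar> = \<bar>a \<bullet> (g (x + b) - g x - H x b)\<bar>"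
      by (simp add: inner_commute inner_diff_right)
    also have "\<dots> \<le> norm a * (K * (norm b)\<^sup>2)"
    proof -
      have "norm (g (x + b) - g x - H x b) \<le> K * (norm b)\<^sup>2"
        using norm_linearization_error_le[OF g lipschitz \<open>0 \<le> K\<close>, where x = x and y = "x + b"] by simp
      then show ?thesis
        using Cauchy_Schwarz_ineq2 by (meson mult_left_mono norm_ge_zero order_trans)
    qed
    finally show ?thesis .
  qed
  moreover have "F (x + a + b) - F (x + a) - F (x + b) + F x = \<psi> (x + a) - \<psi> x"
    by (simp add: \<psi>_def algebra_simps)
  ultimately show ?thesis
    by (simp add: algebra_simps power2_eq_square)
qed

lemma hessian_symmetric:
  fixes F :: "'a::real_inner \<Rightarrow> real"
  assumes F: "\<And>x. (F has_derivative (\<lambda>h. g x \<bullet> h)) (at x)"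
    and g: "\<And>x. (g has_derivative H x) (at x)"
    and lipschitz: "\<And>x y. onorm (\<lambda>v. H x v - H y v) \<le> K * norm (x - y)"
    and "0 \<le> K"
  shows "u \<bullet> H x v = v \<bullet> H x u"
proof -
  have bl: "bounded_linear (H x)"
    using g has_derivative_bounded_linear by blast
  define C where "C = K * (norm u * (3 * (norm v)\<^sup>2 + norm u * norm v) + norm v * (3 * (norm u)\<^sup>2 + norm v * norm u))"
  have "0 \<le> C"
    using \<open>0 \<le> K\<close> by (simp add: C_def)
  \<comment> \<open>The second difference along \<open>t u\<close> and \<open>t v\<close> is symmetric in \<open>u, v\<close> and equals \<open>t\<^sup>2 u \<bullet> H x v + O(t\<^sup>3)\<close>.\<close>
  have approx: "\<bar>u \<bullet> H x v - v \<bullet> H x u\<bar> \<le> t * C" if "0 < t" for t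
  proof -
    have "t\<^sup>2 * \<bar>u \<bullet> H x v - v \<bullet> H x u\<bar> = \<bar>(t *\<^sub>R u) \<bullet> H x (t *\<^sub>R v) - (t *\<^sub>R v) \<bullet> H x (t *\<^sub>R u)\<bar>"
      by (simp add: linear_simps(5)[OF bl] power2_eq_square abs_mult right_diff_distrib[symmetric])
    also have "\<dots> \<le> K * norm (t *\<^sub>R u) * (3 * (norm (t *\<^sub>R v))\<^sup>2 + norm (t *\<^sub>R u) * norm (t *\<^sub>R v))
        + K * norm (t *\<^sub>R v) * (3 * (norm (t *\<^sub>R u))\<^sup>2 + norm (t *\<^sub>R v) * norm (t *\<^sub>R u))"
      using second_difference_approx[OF F g lipschitz \<open>0 \<le> K\<close>, of x "t *\<^sub>R u" "t *\<^sub>R v"]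
        second_difference_approx[OF F g lipschitz \<open>0 \<le> K\<close>, of x "t *\<^sub>R v" "t *\<^sub>R u"]
      by (simp only: abs_le_iff add.commute add.left_commute) linarith
    also have "\<dots> = t\<^sup>2 * (t * C)"
      using that by (simp add: C_def power2_eq_square algebra_simps)
    finally show ?thesis
      using that by simp
  qed
  have "\<bar>u \<bullet> H x v - v \<bullet> H x u\<bar> \<le> 0"
  proof (rule field_le_epsilon)
    fix e :: real
    assume "0 < e"
    then have "e / (C + 1) * C \<le> e"
      using \<open>0 \<le> C\<close> by (simp add: field_simps)
    with approx[of "e / (C + 1)"] \<open>0 < e\<close> \<open>0 \<le> C\<close> show "\<bar>u \<bullet> H x v - v \<bullet> H x u\<bar> \<le> 0 + e"
      by simp
  qed
  then show ?thesis
    by simp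
qed

section \<open>Symmetric positive semidefinite operators\<close>

lemma symmetric_psd_Cauchy_Schwarz:
  fixes A :: "'a::real_inner \<Rightarrow> 'a"
  assumes "linear A"
    and sym: "\<And>u v. u \<bullet> A v = v \<bullet> A u"
    and psd: "\<And>v. 0 \<le> v \<bullet> A v"
  shows "(u \<bullet> A v)\<^sup>2 \<le> (u \<bullet> A u) * (v \<bullet> A v)"
proof -
  have quadratic: "0 \<le> u \<bullet> A u + 2 * t * (u \<bullet> A v) + t\<^sup>2 * (v \<bullet> A v)" for t
  proof -
    have "0 \<le> (u + t *\<^sub>R v) \<bullet> A (u + t *\<^sub>R v)"
      by (rule psd)
    also have "\<dots> = u \<bullet> A u + t * (u \<bullet> A v) + t * (v \<bullet> A u) + t\<^sup>2 * (v \<bullet> A v)"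
      by (simp add: linear_add[OF \<open>linear A\<close>] linear_scale[OF \<open>linear A\<close>]
          inner_add_left inner_add_right power2_eq_square algebra_simps)
    finally show ?thesis
      using sym[of v u] by simp
  qed
  show ?thesis
  proof (cases "v \<bullet> A v = 0")
    case True
    have "u \<bullet> A v = 0"
    proof (rule ccontr)
      assume "u \<bullet> A v \<noteq> 0"
      then show False
        using quadratic[of "- (u \<bullet> A u + 1) / (2 * (u \<bullet> A v))"] True by (simp add: field_simps)
    qed
    with True show ?thesis
      by simp
  next
    case False
    with psd[of v] have pos: "0 < v \<bullet> A v"
      by simp
    have "0 \<le> u \<bullet> A u - (u \<bullet> A v)\<^sup>2 / (v \<bullet> A v)"
      using quadratic[of "- (u \<bullet> A v) / (v \<bullet> A v)"] pos
      by (simp add: power2_eq_square field_simps)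
    with pos show ?thesis
      by (simp add: field_simps)
  qed
qed

lemma norm_symmetric_psd_le:
  fixes A :: "'a::real_inner \<Rightarrow> 'a"
  assumes "linear A"
    and sym: "\<And>u v. u \<bullet> A v = v \<bullet> A u"
    and psd: "\<And>v. 0 \<le> v \<bullet> A v"
    and upper: "\<And>v. v \<bullet> A v \<le> L * (norm v)\<^sup>2"
  shows "norm (A v) \<le> L * norm v"
proof (cases "A v = 0")
  case True
  have "0 \<le> L * (norm v)\<^sup>2"
    using psd upper order_trans by blast
  then have "0 \<le> (L * norm v) * norm v"
    by (simp add: power2_eq_square mult.assoc)
  then have "0 \<le> L * norm v"
    by (cases "norm v = 0") (auto simp: zero_le_mult_iff)
  with True show ?thesis
    by simp
next
  case False
  define w where "w = A v"
  have "0 < (norm w)\<^sup>2" and "0 \<le> L * (norm w)\<^sup>2"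
    using False psd[of w] upper[of w] by (auto simp: w_def)
  then have "0 \<le> L"
    by (simp add: zero_le_mult_iff)
  have "((norm w)\<^sup>2)\<^sup>2 = (w \<bullet> A v)\<^sup>2"
    by (simp add: w_def power2_norm_eq_inner)
  also have "\<dots> \<le> (w \<bullet> A w) * (v \<bullet> A v)"
    by (rule symmetric_psd_Cauchy_Schwarz[OF assms(1-3)])
  also have "\<dots> \<le> (L * (norm w)\<^sup>2) * (L * (norm v)\<^sup>2)"
    using upper psd by (intro mult_mono) (auto intro: order_trans)
  also have "\<dots> = (L * norm w * norm v)\<^sup>2"
    by (simp add: power2_eq_square)
  finally have "(norm w)\<^sup>2 \<le> L * norm w * norm v"
    by (rule power2_le_imp_le) (simp add: \<open>0 \<le> L\<close>)
  with False show ?thesis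
    by (simp add: w_def power2_eq_square mult.assoc)
qed

lemma has_derivative_within_if_quadratic_remainder:
  assumes "bounded_linear f'"
    and remainder: "\<forall>\<^sub>F y in at x within S. norm (f y - f x - f' (y - x)) \<le> C * (norm (y - x))\<^sup>2"
  shows "(f has_derivative f') (at x within S)"
  unfolding has_derivative_within
proof (intro conjI assms(1))
  have "((\<lambda>y. C * norm (y - x)) \<longlongrightarrow> C * norm (x - x)) (at x within S)"
    by (intro tendsto_intros)
  moreover have "\<forall>\<^sub>F y in at x within S. norm ((1 / norm (y - x)) *\<^sub>R (f y - (f x + f' (y - x))))
      \<le> C * norm (y - x)"
    using remainder
  proof eventually_elim
    case (elim y)
    have "norm ((1 / norm (y - x)) *\<^sub>R (f y - (f x + f' (y - x)))) = norm (f y - f x - f' (y - x)) / norm (y - x)"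
      by (simp only: norm_scaleR diff_diff_add) simp
    also have "\<dots> \<le> C * norm (y - x)"
      using elim by (cases "y = x") (simp_all add: divide_le_eq power2_eq_square mult.assoc)
    finally show ?case .
  qed
  ultimately show "((\<lambda>y. (1 / norm (y - x)) *\<^sub>R (f y - (f x + f' (y - x)))) \<longlongrightarrow> 0) (at x within S)"
    by (auto intro: Lim_null_comparison)
qed

section \<open>The \<open>\<ell>\<^sub>1\<close> norm, the simplex and matrices\<close>

lemma l1norm_nonneg: "0 \<le> l1norm z"
  by (simp add: l1norm_def sum_nonneg)

lemma l1norm_minus_commute: "l1norm (a - b) = l1norm (b - a)"
  by (simp add: l1norm_def abs_minus_commute)

lemma l1norm_le_card_norm: "l1norm (z :: real^'n) \<le> real CARD('n) * norm z"
proof -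
  have "l1norm z \<le> (\<Sum>i\<in>(UNIV::'n set). norm z)"
    unfolding l1norm_def by (rule sum_mono) (metis component_le_norm_cart real_norm_def)
  then show ?thesis
    by simp
qed

lemma l1norm_axis: "l1norm (axis i 1 :: real^'n) = 1"
  by (simp add: l1norm_def axis_def if_distrib sum.delta cong: if_cong)

lemma norm_sum_scaleR_le_l1norm:
  fixes v :: "'n::finite \<Rightarrow> 'a::real_normed_vector"
  assumes "\<And>i. norm (v i) \<le> B"
  shows "norm (\<Sum>i\<in>UNIV. z $ i *\<^sub>R v i) \<le> l1norm z * B"
proof -
  have "norm (\<Sum>i\<in>UNIV. z $ i *\<^sub>R v i) \<le> (\<Sum>i\<in>UNIV. \<bar>z $ i\<bar> * B)"
    using assms by (intro order_trans[OF norm_sum] sum_mono) (simp add: mult_left_mono)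
  then show ?thesis
    by (simp add: l1norm_def sum_distrib_right)
qed

lemma op_norm_12_le:
  assumes "\<And>z. l1norm z = 1 \<Longrightarrow> norm (A *v z) \<le> B"
  shows "op_norm_12 A \<le> B"
  unfolding op_norm_12_def
proof (rule cSup_least)
  show "{norm (A *v z) |z. l1norm z = 1} \<noteq> {}"
    using l1norm_axis by blast
qed (use assms in blast)

lemma matrix_vector_mult_sum:
  fixes A :: "'i \<Rightarrow> real^'n^'m"
  assumes "finite S"
  shows "(\<Sum>i\<in>S. c i *\<^sub>R A i) *v v = (\<Sum>i\<in>S. c i *\<^sub>R (A i *v v))"
  using assms by (induction S rule: finite_induct)
    (auto simp: matrix_vector_mult_add_rdistrib scaleR_matrix_vector_assoc)

lemma matrix_vector_mult_uminus: "(- A) *v x = - (A *v x)"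
  for A :: "'a::ring_1^'n^'m"
  by (simp add: vec_eq_iff matrix_vector_mult_def sum_negf)

lemma invertible_if_norm_ge:
  fixes A :: "real^'n^'n"
  assumes "0 < c" and lower: "\<And>v. c * norm v \<le> norm (A *v v)"
  shows "invertible A"
proof -
  have "inj ((*v) A)"
  proof (rule injI)
    fix u v
    assume "A *v u = A *v v"
    then have "c * norm (u - v) \<le> 0"
      using lower[of "u - v"] by (simp add: matrix_vector_mult_diff_distrib)
    with \<open>0 < c\<close> show "u = v"
      by (simp add: mult_le_0_iff)
  qed
  then show ?thesis
    using matrix_left_invertible_injective invertible_left_inverse by blast
qed

lemma matrix_inv_right:
  fixes A :: "real^'n^'n"
  assumes "invertible A"
  shows "A ** matrix_inv A = mat 1"
  using assms unfolding invertible_def matrix_inv_def by (rule someI_ex[THEN conjunct1])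

lemma sum_pos_if_posorth:
  assumes "\<beta> \<in> posorth"
  shows "0 < (\<Sum>i\<in>UNIV. \<beta> $ i)"
proof -
  have nonneg: "\<forall>i. 0 \<le> \<beta> $ i" and "\<beta> \<noteq> 0"
    using assms by (auto simp: posorth_def)
  then obtain j where "\<beta> $ j \<noteq> 0"
    by (auto simp: vec_eq_iff)
  with nonneg have "0 < \<beta> $ j"
    by (simp add: order_le_neq_trans)
  also have "\<beta> $ j \<le> (\<Sum>i\<in>UNIV. \<beta> $ i)"
    using nonneg by (intro member_le_sum) auto
  finally show ?thesis .
qed

lemma std_simplex_subset_posorth: "std_simplex \<subseteq> posorth"
  by (auto simp: std_simplex_def posorth_def)

lemma l1norm_std_simplex: "\<beta> \<in> std_simplex \<Longrightarrow> l1norm \<beta> = 1"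
  by (simp add: std_simplex_def l1norm_def)

lemma axis_in_std_simplex: "axis i 1 \<in> std_simplex"
  by (auto simp: std_simplex_def axis_def)

section \<open>The minimiser map \<open>xstar\<close>\<close>

locale smooth_strongly_convex_family =
  fixes f :: "'n::finite \<Rightarrow> real^'d \<Rightarrow> real"
    and grad :: "'n \<Rightarrow> real^'d \<Rightarrow> real^'d"
    and hess :: "'n \<Rightarrow> real^'d \<Rightarrow> real^'d^'d"
    and \<mu> L L\<^sub>H :: real
  assumes mu_pos: "0 < \<mu>" and mu_le_L: "\<mu> \<le> L"
    and grad: "\<And>i x. (f i has_derivative (\<lambda>h. grad i x \<bullet> h)) (at x)"
    and hess: "\<And>i x. (grad i has_derivative (\<lambda>h. hess i x *v h)) (at x)"
    and hess_bounds: "\<And>i x v. \<mu> * (norm v)\<^sup>2 \<le> v \<bullet> (hess i x *v v) \<and> v \<bullet> (hess i x *v v) \<le> L * (norm v)\<^sup>2"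
    and hess_lip: "\<And>i x y. onorm (\<lambda>v. (hess i x - hess i y) *v v) \<le> L\<^sub>H * dist x y"
begin

definition grad_fbeta :: "real^'n \<Rightarrow> real^'d \<Rightarrow> real^'d" where
  "grad_fbeta \<beta> x = (\<Sum>i\<in>UNIV. \<beta> $ i *\<^sub>R grad i x)"

definition hess_fbeta :: "real^'n \<Rightarrow> real^'d \<Rightarrow> real^'d^'d" where
  "hess_fbeta \<beta> x = (\<Sum>i\<in>UNIV. \<beta> $ i *\<^sub>R hess i x)"

definition grad_matrix :: "real^'d \<Rightarrow> real^'n^'d" where
  "grad_matrix x = (\<chi> j k. grad k x $ j)"

lemma L_pos: "0 < L"
  using mu_pos mu_le_L by linarith

lemma hess_lipschitz: "onorm (\<lambda>v. hess i x *v v - hess i y *v v) \<le> L\<^sub>H * norm (x - y)"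
  using hess_lip[of i x y] by (simp add: matrix_vector_mult_diff_rdistrib dist_norm)

lemma LH_nonneg: "0 \<le> L\<^sub>H"
proof -
  have "0 \<le> onorm (\<lambda>v. hess i 0 *v v - hess i (axis j 1) *v v)"
    using onorm_pos_le[OF matrix_vector_mul_bounded_linear]
    by (simp add: matrix_vector_mult_diff_rdistrib[symmetric])
  also have "\<dots> \<le> L\<^sub>H * norm (0 - axis j (1::real))"
    by (rule hess_lipschitz)
  finally show ?thesis
    by (simp add: zero_le_mult_iff)
qed

lemma hess_symmetric: "u \<bullet> (hess i x *v v) = v \<bullet> (hess i x *v u)"
  by (rule hessian_symmetric[OF grad hess hess_lipschitz LH_nonneg])

lemma norm_hess_le: "norm (hess i x *v v) \<le> L * norm v"
proof (rule norm_symmetric_psd_le)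
  show "0 \<le> v \<bullet> (hess i x *v v)" for v
    using hess_bounds[of v i x] mu_pos by (meson order_trans zero_le_mult_iff zero_le_power2 less_imp_le)
qed (use hess_symmetric hess_bounds in auto)

lemma grad_lipschitz: "norm (grad i x - grad i y) \<le> L * norm (x - y)"
proof (rule differentiable_bound[where S = UNIV and f' = "\<lambda>x h. hess i x *v h"])
  show "(grad i has_derivative (*v) (hess i x)) (at x within UNIV)" for x
    using hess[of i x] by simp
  show "onorm ((*v) (hess i x)) \<le> L" for x
    using norm_hess_le L_pos by (intro onorm_bound) auto
qed auto

lemma hess_fbeta_apply: "hess_fbeta \<beta> x *v v = (\<Sum>i\<in>UNIV. \<beta> $ i *\<^sub>R (hess i x *v v))"
  unfolding hess_fbeta_def by (rule matrix_vector_mult_sum) simp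

lemma grad_matrix_apply: "grad_matrix x *v z = grad_fbeta z x"
  by (simp add: vec_eq_iff grad_matrix_def grad_fbeta_def matrix_vector_mult_def sum_component mult.commute)

lemma grad_fbeta_diff: "grad_fbeta \<beta>1 x - grad_fbeta \<beta>2 x = grad_fbeta (\<beta>1 - \<beta>2) x"
  by (simp add: grad_fbeta_def sum_subtractf scaleR_diff_left)

lemma hess_fbeta_diff: "hess_fbeta \<beta>1 x - hess_fbeta \<beta>2 x = hess_fbeta (\<beta>1 - \<beta>2) x"
  by (simp add: hess_fbeta_def sum_subtractf scaleR_diff_left)

lemma has_derivative_grad_fbeta: "(grad_fbeta \<beta> has_derivative (\<lambda>h. hess_fbeta \<beta> x *v h)) (at x)"
  unfolding grad_fbeta_def[abs_def] hess_fbeta_apply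
  by (intro has_derivative_sum has_derivative_scaleR_right hess)

lemma has_derivative_fbeta: "(fbeta f \<beta> has_derivative (\<lambda>h. grad_fbeta \<beta> x \<bullet> h)) (at x)"
proof -
  have "((\<lambda>x. \<Sum>i\<in>UNIV. \<beta> $ i * f i x) has_derivative (\<lambda>h. \<Sum>i\<in>UNIV. \<beta> $ i * (grad i x \<bullet> h))) (at x)"
    by (intro has_derivative_sum has_derivative_mult_right grad)
  then show ?thesis
    by (simp add: fbeta_def[abs_def] grad_fbeta_def inner_sum_left)
qed

lemma grad_fbeta_lipschitz: "norm (grad_fbeta z x - grad_fbeta z y) \<le> l1norm z * (L * norm (x - y))"
  unfolding grad_fbeta_def sum_subtractf[symmetric] scaleR_diff_right[symmetric]
  by (rule norm_sum_scaleR_le_l1norm[OF grad_lipschitz])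

lemma norm_hess_fbeta_le: "norm (hess_fbeta z x *v v) \<le> l1norm z * (L * norm v)"
  unfolding hess_fbeta_apply by (rule norm_sum_scaleR_le_l1norm[OF norm_hess_le])

lemma hess_fbeta_lipschitz:
  "norm (hess_fbeta \<beta> x *v v - hess_fbeta \<beta> y *v v) \<le> l1norm \<beta> * (L\<^sub>H * norm (x - y) * norm v)"
proof -
  have "norm (hess i x *v v - hess i y *v v) \<le> L\<^sub>H * norm (x - y) * norm v" for i
  proof -
    have "norm (hess i x *v v - hess i y *v v) \<le> onorm (\<lambda>v. hess i x *v v - hess i y *v v) * norm v"
      by (intro onorm bounded_linear_sub matrix_vector_mul_bounded_linear)
    also have "\<dots> \<le> L\<^sub>H * norm (x - y) * norm v"
      using hess_lipschitz by (rule mult_right_mono) simp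
    finally show ?thesis .
  qed
  then show ?thesis
    unfolding hess_fbeta_apply sum_subtractf[symmetric] scaleR_diff_right[symmetric]
    by (rule norm_sum_scaleR_le_l1norm)
qed

lemma hess_fbeta_coercive:
  assumes "\<And>i. 0 \<le> \<beta> $ i"
  shows "\<mu> * (\<Sum>i\<in>UNIV. \<beta> $ i) * (norm v)\<^sup>2 \<le> v \<bullet> (hess_fbeta \<beta> x *v v)"
proof -
  have "\<mu> * (\<Sum>i\<in>UNIV. \<beta> $ i) * (norm v)\<^sup>2 = (\<Sum>i\<in>UNIV. \<beta> $ i * (\<mu> * (norm v)\<^sup>2))"
    by (simp add: sum_distrib_left sum_distrib_right mult_ac)
  also have "\<dots> \<le> (\<Sum>i\<in>UNIV. \<beta> $ i * (v \<bullet> (hess i x *v v)))"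
    using assms hess_bounds by (intro sum_mono mult_left_mono) auto
  also have "\<dots> = v \<bullet> (hess_fbeta \<beta> x *v v)"
    by (simp add: hess_fbeta_apply inner_sum_right)
  finally show ?thesis .
qed

lemma norm_hess_fbeta_ge:
  assumes "\<beta> \<in> posorth"
  shows "\<mu> * (\<Sum>i\<in>UNIV. \<beta> $ i) * norm v \<le> norm (hess_fbeta \<beta> x *v v)"
proof -
  have "(\<mu> * (\<Sum>i\<in>UNIV. \<beta> $ i) * norm v) * norm v \<le> v \<bullet> (hess_fbeta \<beta> x *v v)"
    using hess_fbeta_coercive[of \<beta> v x] assms by (simp add: posorth_def power2_eq_square mult.assoc)
  also have "\<dots> \<le> norm (hess_fbeta \<beta> x *v v) * norm v"
    using Cauchy_Schwarz_ineq2[of v "hess_fbeta \<beta> x *v v"] by (simp add: mult.commute)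
  finally show ?thesis
    by (cases "v = 0") auto
qed

lemma grad_fbeta_strongly_monotone:
  assumes "\<beta> \<in> posorth"
  shows "\<mu> * (\<Sum>i\<in>UNIV. \<beta> $ i) * (norm (x - y))\<^sup>2 \<le> (grad_fbeta \<beta> x - grad_fbeta \<beta> y) \<bullet> (x - y)"
  using assms
  by (intro derivative_strongly_monotone[where H = "\<lambda>x h. hess_fbeta \<beta> x *v h", OF has_derivative_grad_fbeta]
      hess_fbeta_coercive) (auto simp: posorth_def)

lemma grad_fbeta_zero_if_minimizer:
  assumes "\<forall>y. fbeta f \<beta> x \<le> fbeta f \<beta> y"
  shows "grad_fbeta \<beta> x = 0"
proof -
  have "(\<lambda>h. grad_fbeta \<beta> x \<bullet> h) = (\<lambda>h. 0)"
    by (rule differential_zero_maxmin[of x UNIV, OF _ _ has_derivative_fbeta]) (use assms in auto)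
  then show ?thesis
    by (metis inner_eq_zero_iff)
qed

lemma stationary_point_unique:
  assumes "\<beta> \<in> posorth" "grad_fbeta \<beta> x = 0" "grad_fbeta \<beta> y = 0"
  shows "x = y"
proof -
  define c where "c = \<mu> * (\<Sum>i\<in>UNIV. \<beta> $ i)"
  have "c * (norm (x - y))\<^sup>2 \<le> c * 0"
    using grad_fbeta_strongly_monotone[OF assms(1), of x y] assms by (simp add: c_def)
  moreover have "0 < c"
    using mu_pos sum_pos_if_posorth[OF assms(1)] by (simp add: c_def)
  ultimately show ?thesis
    by (simp add: mult_le_0_iff)
qed

lemma fbeta_has_minimizer:
  assumes "\<beta> \<in> posorth"
  obtains x where "\<forall>y. fbeta f \<beta> x \<le> fbeta f \<beta> y"
proof -
  define m where "m = \<mu> * (\<Sum>i\<in>UNIV. \<beta> $ i)"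
  have "0 < m"
    using mu_pos sum_pos_if_posorth[OF assms] by (simp add: m_def)
  define r where "r = 2 * norm (grad_fbeta \<beta> 0) / m"
  have growth: "fbeta f \<beta> 0 + grad_fbeta \<beta> 0 \<bullet> (y - 0) + m / 2 * (norm (y - 0))\<^sup>2 \<le> fbeta f \<beta> y" for y
    unfolding m_def using assms
    by (intro quadratic_lower_bound[where H = "\<lambda>x h. hess_fbeta \<beta> x *v h", OF has_derivative_fbeta
          has_derivative_grad_fbeta] hess_fbeta_coercive) (auto simp: posorth_def)
  have "continuous_on (cball 0 r) (fbeta f \<beta>)"
    using has_derivative_fbeta
    by (intro continuous_at_imp_continuous_on ballI has_derivative_continuous) blast
  moreover have "0 \<le> r"
    using \<open>0 < m\<close> by (simp add: r_def)
  ultimately obtain x where min_on_ball: "\<forall>y\<in>cball 0 r. fbeta f \<beta> x \<le> fbeta f \<beta> y"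
    using continuous_attains_inf[OF compact_cball] by (metis cball_eq_empty not_le)
  have "fbeta f \<beta> x \<le> fbeta f \<beta> y" for y
  proof (cases "y \<in> cball 0 r")
    case False
    then have "\<not> norm (y - 0) \<le> 2 * norm (grad_fbeta \<beta> 0) / m"
      by (simp add: r_def)
    then have "fbeta f \<beta> 0 < fbeta f \<beta> y"
      using norm_le_of_quadratic_growth[OF \<open>0 < m\<close> growth[of y]] by linarith
    moreover have "fbeta f \<beta> x \<le> fbeta f \<beta> 0"
      using min_on_ball \<open>0 \<le> r\<close> by simp
    ultimately show ?thesis
      by simp
  qed (use min_on_ball in simp)
  then show ?thesis
    using that by blast
qed

lemma xstar_minimizes:
  assumes "\<beta> \<in> posorth"
  shows "fbeta f \<beta> (xstar f \<beta>) \<le> fbeta f \<beta> y"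
proof -
  obtain x where x: "\<forall>y. fbeta f \<beta> x \<le> fbeta f \<beta> y"
    using fbeta_has_minimizer[OF assms] by blast
  have "xstar f \<beta> = x"
    unfolding xstar_def
  proof (rule the_equality)
    show "z = x" if "\<forall>y. fbeta f \<beta> z \<le> fbeta f \<beta> y" for z
      using stationary_point_unique[OF assms] grad_fbeta_zero_if_minimizer that x by blast
  qed (rule x)
  with x show ?thesis
    by simp
qed

lemma grad_fbeta_xstar: "\<beta> \<in> posorth \<Longrightarrow> grad_fbeta \<beta> (xstar f \<beta>) = 0"
  using grad_fbeta_zero_if_minimizer xstar_minimizes by blast

lemma xstar_in_pareto_set:
  assumes "\<beta> \<in> std_simplex"
  shows "xstar f \<beta> \<in> pareto_set f"
  unfolding pareto_set_def pareto_optimal_def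
proof clarsimp
  fix y i
  assume dominates: "\<forall>i. f i y \<le> f i (xstar f \<beta>)" and "f i y < f i (xstar f \<beta>)"
  have "\<beta> \<in> posorth"
    using assms std_simplex_subset_posorth by blast
  have "fbeta f \<beta> y \<le> fbeta f \<beta> (xstar f \<beta>)"
    unfolding fbeta_def using assms dominates by (intro sum_mono mult_left_mono) (auto simp: std_simplex_def)
  then have "\<forall>z. fbeta f \<beta> y \<le> fbeta f \<beta> z"
    using xstar_minimizes[OF \<open>\<beta> \<in> posorth\<close>] order_trans by blast
  then have "grad_fbeta \<beta> y = 0"
    by (rule grad_fbeta_zero_if_minimizer)
  then have "y = xstar f \<beta>"
    by (rule stationary_point_unique[OF \<open>\<beta> \<in> posorth\<close> _ grad_fbeta_xstar[OF \<open>\<beta> \<in> posorth\<close>]])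
  with \<open>f i y < f i (xstar f \<beta>)\<close> show False
    by simp
qed

lemma bounded_pareto_set: "bounded (pareto_set f)"
proof -
  have "norm x \<le> (\<Sum>i\<in>UNIV. 2 * norm (grad i 0) / \<mu>)" if "x \<in> pareto_set f" for x
  proof -
    have "\<not> (\<forall>i. f i 0 < f i x)"
    proof
      assume "\<forall>i. f i 0 < f i x"
      then have "(\<forall>i. f i 0 \<le> f i x) \<and> (\<exists>i. f i 0 < f i x)"
        by (auto intro: less_imp_le)
      with \<open>x \<in> pareto_set f\<close> show False
        unfolding pareto_set_def pareto_optimal_def by blast
    qed
    then obtain i where "f i x \<le> f i 0"
      by (auto simp: not_less)
    moreover have "f i 0 + grad i 0 \<bullet> (x - 0) + \<mu> / 2 * (norm (x - 0))\<^sup>2 \<le> f i x"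
      by (rule quadratic_lower_bound[where H = "\<lambda>x h. hess i x *v h", OF grad hess]) (use hess_bounds in auto)
    ultimately have "norm (x - 0) \<le> 2 * norm (grad i 0) / \<mu>"
      by (intro norm_le_of_quadratic_growth[where F = "f i", OF mu_pos])
    then have "norm x \<le> 2 * norm (grad i 0) / \<mu>"
      by simp
    also have "\<dots> \<le> (\<Sum>i\<in>UNIV. 2 * norm (grad i 0) / \<mu>)"
      using mu_pos by (intro member_le_sum) auto
    finally show ?thesis .
  qed
  then show ?thesis
    by (intro boundedI) blast
qed

abbreviation R :: real where
  "R \<equiv> diameter (pareto_set f)"

lemma R_nonneg: "0 \<le> R"
  by (rule diameter_ge_0[OF bounded_pareto_set])

lemma norm_grad_xstar_le:
  assumes "\<beta> \<in> std_simplex"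
  shows "norm (grad i (xstar f \<beta>)) \<le> L * R"
proof -
  let ?e = "axis i 1 :: real^'n"
  have "grad_fbeta ?e x = (\<Sum>j\<in>UNIV. if j = i then grad j x else 0)" for x
    unfolding grad_fbeta_def by (rule sum.cong) (simp_all add: axis_def)
  then have "grad_fbeta ?e x = grad i x" for x
    by simp
  then have "grad i (xstar f ?e) = 0"
    using grad_fbeta_xstar axis_in_std_simplex std_simplex_subset_posorth by (metis subsetD)
  then have "norm (grad i (xstar f \<beta>)) = norm (grad i (xstar f \<beta>) - grad i (xstar f ?e))"
    by simp
  also have "\<dots> \<le> L * norm (xstar f \<beta> - xstar f ?e)"
    by (rule grad_lipschitz)
  also have "\<dots> \<le> L * R"
    using diameter_bounded_bound[OF bounded_pareto_set xstar_in_pareto_set[OF assms]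
        xstar_in_pareto_set[OF axis_in_std_simplex]] L_pos
    by (intro mult_left_mono) (auto simp: dist_norm)
  finally show ?thesis .
qed

lemma norm_grad_fbeta_xstar_le:
  "\<beta> \<in> std_simplex \<Longrightarrow> norm (grad_fbeta z (xstar f \<beta>)) \<le> l1norm z * (L * R)"
  unfolding grad_fbeta_def by (rule norm_sum_scaleR_le_l1norm[OF norm_grad_xstar_le])

lemma xstar_stability:
  assumes "\<beta>1 \<in> posorth" "\<beta>2 \<in> posorth"
  shows "\<mu> * (\<Sum>i\<in>UNIV. \<beta>1 $ i) * norm (xstar f \<beta>1 - xstar f \<beta>2)
    \<le> norm (grad_fbeta (\<beta>1 - \<beta>2) (xstar f \<beta>2))"
proof -
  let ?x1 = "xstar f \<beta>1" and ?x2 = "xstar f \<beta>2"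
  have "\<mu> * (\<Sum>i\<in>UNIV. \<beta>1 $ i) * norm (?x1 - ?x2) * norm (?x1 - ?x2)
      \<le> (grad_fbeta \<beta>1 ?x1 - grad_fbeta \<beta>1 ?x2) \<bullet> (?x1 - ?x2)"
    using grad_fbeta_strongly_monotone[OF assms(1)] by (simp add: power2_eq_square mult.assoc)
  also have "grad_fbeta \<beta>1 ?x1 - grad_fbeta \<beta>1 ?x2 = - grad_fbeta (\<beta>1 - \<beta>2) ?x2"
    using grad_fbeta_xstar[OF assms(1)] grad_fbeta_xstar[OF assms(2)] grad_fbeta_diff[of \<beta>1 ?x2 \<beta>2]
    by simp
  also have "- grad_fbeta (\<beta>1 - \<beta>2) ?x2 \<bullet> (?x1 - ?x2) \<le> norm (grad_fbeta (\<beta>1 - \<beta>2) ?x2) * norm (?x1 - ?x2)"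
    using Cauchy_Schwarz_ineq2[of "grad_fbeta (\<beta>1 - \<beta>2) ?x2" "?x1 - ?x2"] by simp
  finally show ?thesis
    by (cases "?x1 = ?x2") (auto elim: mult_right_le_imp_le)
qed

lemma xstar_lipschitz:
  assumes "\<beta>1 \<in> std_simplex" "\<beta>2 \<in> std_simplex"
  shows "norm (xstar f \<beta>1 - xstar f \<beta>2) \<le> L / \<mu> * R * l1norm (\<beta>1 - \<beta>2)"
proof -
  have "\<beta>1 \<in> posorth" "\<beta>2 \<in> posorth" and "(\<Sum>i\<in>UNIV. \<beta>1 $ i) = 1"
    using assms std_simplex_subset_posorth by (auto simp: std_simplex_def)
  then have "\<mu> * norm (xstar f \<beta>1 - xstar f \<beta>2) \<le> l1norm (\<beta>1 - \<beta>2) * (L * R)"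
    using xstar_stability[of \<beta>1 \<beta>2] norm_grad_fbeta_xstar_le[OF assms(2), of "\<beta>1 - \<beta>2"] by simp
  with mu_pos show ?thesis
    by (simp add: field_simps)
qed

lemma invertible_hess_fbeta:
  assumes "\<beta> \<in> posorth"
  shows "invertible (hess_fbeta \<beta> x)"
  using mu_pos sum_pos_if_posorth[OF assms]
  by (intro invertible_if_norm_ge[OF _ norm_hess_fbeta_ge[OF assms]]) simp

text \<open>Differentiating \<open>grad_fbeta \<beta> (xstar f \<beta>) = 0\<close> in \<open>\<beta>\<close> (implicit function theorem) gives
  \<open>hess_fbeta \<beta> (xstar f \<beta>) ** D + grad_matrix (xstar f \<beta>) = 0\<close> for the derivative \<open>D\<close>.\<close>

definition xstar_deriv :: "real^'n \<Rightarrow> real^'n^'d" where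
  "xstar_deriv \<beta> = matrix_inv (hess_fbeta \<beta> (xstar f \<beta>)) ** (- grad_matrix (xstar f \<beta>))"

lemma hess_fbeta_xstar_deriv:
  assumes "\<beta> \<in> posorth"
  shows "hess_fbeta \<beta> (xstar f \<beta>) *v (xstar_deriv \<beta> *v z) = - grad_fbeta z (xstar f \<beta>)"
proof -
  let ?H = "hess_fbeta \<beta> (xstar f \<beta>)"
  have "?H ** xstar_deriv \<beta> = - grad_matrix (xstar f \<beta>)"
    using matrix_inv_right[OF invertible_hess_fbeta[OF assms]]
    by (simp add: xstar_deriv_def matrix_mul_assoc)
  then show ?thesis
    by (metis grad_matrix_apply matrix_vector_mul_assoc matrix_vector_mult_uminus)
qed

lemma norm_xstar_deriv_le:
  assumes "\<beta> \<in> std_simplex"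
  shows "\<mu> * norm (xstar_deriv \<beta> *v z) \<le> l1norm z * (L * R)"
proof -
  have "\<beta> \<in> posorth" and "(\<Sum>i\<in>UNIV. \<beta> $ i) = 1"
    using assms std_simplex_subset_posorth by (auto simp: std_simplex_def)
  then have "\<mu> * norm (xstar_deriv \<beta> *v z) \<le> norm (hess_fbeta \<beta> (xstar f \<beta>) *v (xstar_deriv \<beta> *v z))"
    using norm_hess_fbeta_ge by fastforce
  also have "\<dots> = norm (grad_fbeta z (xstar f \<beta>))"
    by (simp add: hess_fbeta_xstar_deriv[OF \<open>\<beta> \<in> posorth\<close>])
  also have "\<dots> \<le> l1norm z * (L * R)"
    by (rule norm_grad_fbeta_xstar_le[OF assms])
  finally show ?thesis .
qed

lemma grad_fbeta_linearization_error:
  "norm (grad_fbeta \<beta> y - grad_fbeta \<beta> x - hess_fbeta \<beta> x *v (y - x)) \<le> l1norm \<beta> * L\<^sub>H * (norm (y - x))\<^sup>2"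
proof (rule norm_linearization_error_le[where H = "\<lambda>x v. hess_fbeta \<beta> x *v v", OF has_derivative_grad_fbeta])
  show "onorm (\<lambda>v. hess_fbeta \<beta> z *v v - hess_fbeta \<beta> x *v v) \<le> l1norm \<beta> * L\<^sub>H * norm (z - x)" for z
    using hess_fbeta_lipschitz by (intro onorm_bound) (auto simp: l1norm_nonneg LH_nonneg mult.assoc)
  show "0 \<le> l1norm \<beta> * L\<^sub>H"
    by (simp add: l1norm_nonneg LH_nonneg)
qed

lemma hess_fbeta_xstar_linearization_error:
  assumes "\<beta>0 \<in> posorth" "\<beta> \<in> posorth"
  defines "x0 \<equiv> xstar f \<beta>0" and "x \<equiv> xstar f \<beta>"
  shows "hess_fbeta \<beta>0 x0 *v (x - x0 - xstar_deriv \<beta>0 *v (\<beta> - \<beta>0))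
    = hess_fbeta (\<beta>0 - \<beta>) x0 *v (x - x0) - (grad_fbeta \<beta> x - grad_fbeta \<beta> x0 - hess_fbeta \<beta> x0 *v (x - x0))"
proof -
  have "hess_fbeta \<beta>0 x0 *v (xstar_deriv \<beta>0 *v (\<beta> - \<beta>0)) = grad_fbeta \<beta>0 x0 - grad_fbeta \<beta> x0"
    using hess_fbeta_xstar_deriv[OF assms(1)] grad_fbeta_diff[of \<beta> x0 \<beta>0, symmetric] by (simp add: x0_def)
  moreover have "grad_fbeta \<beta>0 x0 = 0" and "grad_fbeta \<beta> x = 0"
    using grad_fbeta_xstar assms by (auto simp: x0_def x_def)
  ultimately show ?thesis
    by (simp add: matrix_vector_mult_diff_distrib hess_fbeta_diff[symmetric] matrix_vector_mult_diff_rdistrib)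
qed

lemma xstar_dist_le_near_simplex:
  assumes "\<beta>0 \<in> std_simplex" "\<beta> \<in> posorth" and small: "l1norm (\<beta> - \<beta>0) \<le> 1 / 2"
  shows "norm (xstar f \<beta> - xstar f \<beta>0) \<le> 2 * l1norm (\<beta> - \<beta>0) * L * R / \<mu>"
    and "(\<Sum>i\<in>UNIV. \<beta> $ i) * norm (xstar f \<beta> - xstar f \<beta>0) \<le> l1norm (\<beta> - \<beta>0) * L * R / \<mu>"
proof -
  define l s d where "l = l1norm (\<beta> - \<beta>0)" and "s = (\<Sum>i\<in>UNIV. \<beta> $ i)"
    and "d = norm (xstar f \<beta> - xstar f \<beta>0)"
  have "\<beta>0 \<in> posorth" and "(\<Sum>i\<in>UNIV. \<beta>0 $ i) = 1"
    using assms(1) std_simplex_subset_posorth by (auto simp: std_simplex_def)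
  then have "\<bar>s - 1\<bar> \<le> l"
    using sum_abs[of "\<lambda>i. (\<beta> - \<beta>0) $ i" UNIV] by (simp add: s_def l_def l1norm_def sum_subtractf)
  with small have "1 / 2 \<le> s"
    by (simp add: l_def)
  have "\<mu> * s * d \<le> l * (L * R)"
    using xstar_stability[OF assms(2) \<open>\<beta>0 \<in> posorth\<close>] norm_grad_fbeta_xstar_le[OF assms(1), of "\<beta> - \<beta>0"]
    by (simp add: s_def d_def l_def)
  then show "s * d \<le> l * L * R / \<mu>"
    using mu_pos by (simp add: field_simps)
  have "0 \<le> \<mu> * d * (2 * s - 1)"
    using \<open>1 / 2 \<le> s\<close> mu_pos by (simp add: d_def)
  with \<open>\<mu> * s * d \<le> l * (L * R)\<close> have "\<mu> * d \<le> 2 * l * L * R"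
    by (simp add: algebra_simps)
  then show "d \<le> 2 * l * L * R / \<mu>"
    using mu_pos by (simp add: field_simps)
qed

lemma xstar_linearization_error:
  assumes "\<beta>0 \<in> std_simplex" "\<beta> \<in> posorth" and small: "l1norm (\<beta> - \<beta>0) \<le> 1 / 2"
  shows "norm (xstar f \<beta> - xstar f \<beta>0 - xstar_deriv \<beta>0 *v (\<beta> - \<beta>0))
    \<le> 2 * (L / \<mu>)\<^sup>2 * R * (1 + L\<^sub>H * R / \<mu>) * (l1norm (\<beta> - \<beta>0))\<^sup>2"
proof -
  define x0 x l s d where "x0 = xstar f \<beta>0" and "x = xstar f \<beta>" and "l = l1norm (\<beta> - \<beta>0)"
    and "s = (\<Sum>i\<in>UNIV. \<beta> $ i)" and "d = norm (x - x0)"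
  have "\<beta>0 \<in> posorth" and "(\<Sum>i\<in>UNIV. \<beta>0 $ i) = 1"
    using assms(1) std_simplex_subset_posorth by (auto simp: std_simplex_def)
  have "l1norm \<beta> = s" and "0 < s"
    using assms(2) sum_pos_if_posorth by (auto simp: s_def l1norm_def posorth_def)
  have d_le: "d \<le> 2 * l * L * R / \<mu>" and sd_le: "s * d \<le> l * L * R / \<mu>"
    using xstar_dist_le_near_simplex[OF assms] by (simp_all add: x0_def x_def l_def s_def d_def)
  have "\<mu> * norm (x - x0 - xstar_deriv \<beta>0 *v (\<beta> - \<beta>0))
      \<le> norm (hess_fbeta \<beta>0 x0 *v (x - x0 - xstar_deriv \<beta>0 *v (\<beta> - \<beta>0)))"
    using norm_hess_fbeta_ge[OF \<open>\<beta>0 \<in> posorth\<close>] \<open>(\<Sum>i\<in>UNIV. \<beta>0 $ i) = 1\<close> by fastforce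
  also have "\<dots> \<le> l1norm (\<beta>0 - \<beta>) * (L * norm (x - x0)) + l1norm \<beta> * L\<^sub>H * (norm (x - x0))\<^sup>2"
    unfolding hess_fbeta_xstar_linearization_error[OF \<open>\<beta>0 \<in> posorth\<close> assms(2), folded x0_def x_def]
    using norm_triangle_ineq4 norm_hess_fbeta_le grad_fbeta_linearization_error
    by (rule order_trans[OF _ add_mono])
  also have "\<dots> = l * L * d + L\<^sub>H * d * (s * d)"
    by (simp add: l_def d_def l1norm_minus_commute \<open>l1norm \<beta> = s\<close> power2_eq_square algebra_simps)
  also have "\<dots> \<le> l * L * (2 * l * L * R / \<mu>) + L\<^sub>H * (2 * l * L * R / \<mu>) * (l * L * R / \<mu>)"
  proof (rule add_mono)
    have "0 \<le> l * L"
      using L_pos by (simp add: l_def l1norm_nonneg)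
    with d_le show "l * L * d \<le> l * L * (2 * l * L * R / \<mu>)"
      by (rule mult_left_mono)
    have "L\<^sub>H * d \<le> L\<^sub>H * (2 * l * L * R / \<mu>)"
      using d_le LH_nonneg by (rule mult_left_mono)
    moreover have "0 \<le> L\<^sub>H * d" and "0 \<le> s * d"
      using LH_nonneg \<open>0 < s\<close> by (simp_all add: d_def)
    ultimately show "L\<^sub>H * d * (s * d) \<le> L\<^sub>H * (2 * l * L * R / \<mu>) * (l * L * R / \<mu>)"
      using sd_le by (meson mult_mono order_trans)
  qed
  also have "\<dots> = \<mu> * (2 * (L / \<mu>)\<^sup>2 * R * (1 + L\<^sub>H * R / \<mu>) * l\<^sup>2)"
    using mu_pos by (simp add: power2_eq_square field_simps)
  finally show ?thesis
    using mu_pos by (simp add: x_def x0_def l_def)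
qed

lemma has_derivative_xstar:
  assumes "\<beta>0 \<in> std_simplex"
  shows "(xstar f has_derivative (\<lambda>h. xstar_deriv \<beta>0 *v h)) (at \<beta>0 within posorth)"
proof (rule has_derivative_within_if_quadratic_remainder)
  define N where "N = real CARD('n)"
  define M where "M = 2 * (L / \<mu>)\<^sup>2 * R * (1 + L\<^sub>H * R / \<mu>)"
  have "0 < N"
    by (simp add: N_def)
  have "0 \<le> M"
    using R_nonneg LH_nonneg mu_pos by (simp add: M_def)
  have "norm (xstar f \<beta> - xstar f \<beta>0 - xstar_deriv \<beta>0 *v (\<beta> - \<beta>0)) \<le> M * N\<^sup>2 * (norm (\<beta> - \<beta>0))\<^sup>2"
    if "\<beta> \<in> posorth" and "dist \<beta> \<beta>0 < 1 / (2 * N)" for \<beta>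
  proof -
    have "l1norm (\<beta> - \<beta>0) \<le> N * norm (\<beta> - \<beta>0)"
      unfolding N_def by (rule l1norm_le_card_norm)
    moreover have "N * norm (\<beta> - \<beta>0) \<le> 1 / 2"
      using that(2) \<open>0 < N\<close> by (simp add: dist_norm field_simps)
    ultimately have "norm (xstar f \<beta> - xstar f \<beta>0 - xstar_deriv \<beta>0 *v (\<beta> - \<beta>0)) \<le> M * (l1norm (\<beta> - \<beta>0))\<^sup>2"
      using xstar_linearization_error[OF assms that(1)] by (simp add: M_def)
    also have "\<dots> \<le> M * (N * norm (\<beta> - \<beta>0))\<^sup>2"
      using \<open>l1norm (\<beta> - \<beta>0) \<le> N * norm (\<beta> - \<beta>0)\<close> \<open>0 \<le> M\<close>
      by (intro mult_left_mono power_mono) (simp_all add: l1norm_nonneg)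
    finally show ?thesis
      by (simp add: power_mult_distrib mult.assoc)
  qed
  moreover have "0 < 1 / (2 * N)"
    using \<open>0 < N\<close> by simp
  ultimately show "\<forall>\<^sub>F \<beta> in at \<beta>0 within posorth.
      norm (xstar f \<beta> - xstar f \<beta>0 - xstar_deriv \<beta>0 *v (\<beta> - \<beta>0)) \<le> M * N\<^sup>2 * (norm (\<beta> - \<beta>0))\<^sup>2"
    unfolding eventually_at by blast
qed (rule matrix_vector_mul_bounded_linear)

lemma norm_hess_fbeta_xstar_deriv_diff_le:
  assumes "\<beta>1 \<in> std_simplex" "\<beta>2 \<in> std_simplex" and "l1norm z = 1"
  defines "x1 \<equiv> xstar f \<beta>1" and "x2 \<equiv> xstar f \<beta>2" and "w \<equiv> xstar_deriv \<beta>2 *v z"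
  shows "norm (hess_fbeta \<beta>1 x1 *v ((xstar_deriv \<beta>1 - xstar_deriv \<beta>2) *v z))
    \<le> L * norm (x1 - x2) + L\<^sub>H * norm (x1 - x2) * norm w + l1norm (\<beta>1 - \<beta>2) * (L * norm w)"
proof -
  have "\<beta>1 \<in> posorth" "\<beta>2 \<in> posorth"
    using assms std_simplex_subset_posorth by auto
  \<comment> \<open>Subtract the linear systems \<open>hess_fbeta \<beta>k xk *v (xstar_deriv \<beta>k *v z) = - grad_fbeta z xk\<close>, \<open>k = 1, 2\<close>.\<close>
  have "hess_fbeta \<beta>1 x1 *v ((xstar_deriv \<beta>1 - xstar_deriv \<beta>2) *v z) = (grad_fbeta z x2 - grad_fbeta z x1)
      + (hess_fbeta \<beta>2 x2 *v w - hess_fbeta \<beta>2 x1 *v w) + hess_fbeta (\<beta>2 - \<beta>1) x1 *v w"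
    using hess_fbeta_xstar_deriv[OF \<open>\<beta>1 \<in> posorth\<close>, of z] hess_fbeta_xstar_deriv[OF \<open>\<beta>2 \<in> posorth\<close>, of z]
    by (simp add: x1_def x2_def w_def matrix_vector_mult_diff_distrib
        hess_fbeta_diff[symmetric] matrix_vector_mult_diff_rdistrib)
  moreover have "norm (grad_fbeta z x2 - grad_fbeta z x1) \<le> L * norm (x1 - x2)"
    using grad_fbeta_lipschitz[of z x2 x1] assms(3) by (simp add: norm_minus_commute)
  moreover have "norm (hess_fbeta \<beta>2 x2 *v w - hess_fbeta \<beta>2 x1 *v w) \<le> L\<^sub>H * norm (x1 - x2) * norm w"
    using hess_fbeta_lipschitz[of \<beta>2 x2 w x1] l1norm_std_simplex[OF assms(2)]
    by (simp add: norm_minus_commute)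
  moreover have "norm (hess_fbeta (\<beta>2 - \<beta>1) x1 *v w) \<le> l1norm (\<beta>1 - \<beta>2) * (L * norm w)"
    using norm_hess_fbeta_le[of "\<beta>2 - \<beta>1" x1 w] by (simp add: l1norm_minus_commute)
  ultimately show ?thesis
    by (metis (no_types, lifting) add_mono norm_triangle_le)
qed

lemma xstar_deriv_lipschitz_apply:
  assumes "\<beta>1 \<in> std_simplex" "\<beta>2 \<in> std_simplex" and "l1norm z = 1"
  shows "norm ((xstar_deriv \<beta>1 - xstar_deriv \<beta>2) *v z)
    \<le> 2 * (L / \<mu>)\<^sup>2 * R * (1 + L\<^sub>H * R / \<mu>) * l1norm (\<beta>1 - \<beta>2)"
proof -
  define x1 w l d where "x1 = xstar f \<beta>1" and "w = xstar_deriv \<beta>2 *v z"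
    and "l = l1norm (\<beta>1 - \<beta>2)" and "d = norm (xstar f \<beta>1 - xstar f \<beta>2)"
  have "\<beta>1 \<in> posorth" and "(\<Sum>i\<in>UNIV. \<beta>1 $ i) = 1"
    using assms std_simplex_subset_posorth by (auto simp: std_simplex_def)
  have "0 \<le> l"
    by (simp add: l_def l1norm_nonneg)
  have dist_x: "d \<le> L / \<mu> * R * l"
    unfolding d_def l_def by (rule xstar_lipschitz[OF assms(1,2)])
  have norm_w: "norm w \<le> L * R / \<mu>"
    using norm_xstar_deriv_le[OF assms(2), of z] assms(3) mu_pos by (simp add: w_def field_simps)
  have "\<mu> * norm ((xstar_deriv \<beta>1 - xstar_deriv \<beta>2) *v z)
      \<le> norm (hess_fbeta \<beta>1 x1 *v ((xstar_deriv \<beta>1 - xstar_deriv \<beta>2) *v z))"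
    using norm_hess_fbeta_ge[OF \<open>\<beta>1 \<in> posorth\<close>] \<open>(\<Sum>i\<in>UNIV. \<beta>1 $ i) = 1\<close> by fastforce
  also have "\<dots> \<le> L * d + L\<^sub>H * d * norm w + l * (L * norm w)"
    using norm_hess_fbeta_xstar_deriv_diff_le[OF assms] by (simp add: x1_def w_def l_def d_def)
  also have "\<dots> \<le> L * (L / \<mu> * R * l) + L\<^sub>H * (L / \<mu> * R * l) * (L * R / \<mu>) + l * (L * (L * R / \<mu>))"
  proof -
    have "L\<^sub>H * d \<le> L\<^sub>H * (L / \<mu> * R * l)"
      using dist_x LH_nonneg by (rule mult_left_mono)
    then have "L\<^sub>H * d * norm w \<le> L\<^sub>H * (L / \<mu> * R * l) * (L * R / \<mu>)"
      by (rule mult_mono[OF _ norm_w]) (use LH_nonneg R_nonneg mu_pos L_pos \<open>0 \<le> l\<close> in auto)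
    moreover have "L * d \<le> L * (L / \<mu> * R * l)"
      using dist_x by (rule mult_left_mono) (use L_pos in simp)
    moreover have "l * (L * norm w) \<le> l * (L * (L * R / \<mu>))"
      by (intro mult_left_mono norm_w) (use L_pos \<open>0 \<le> l\<close> in auto)
    ultimately show ?thesis
      by linarith
  qed
  also have "\<dots> = \<mu> * ((L / \<mu>)\<^sup>2 * R * l * (2 + L\<^sub>H * R / \<mu>))"
    using mu_pos by (simp add: power2_eq_square field_simps)
  also have "\<dots> \<le> \<mu> * (2 * (L / \<mu>)\<^sup>2 * R * (1 + L\<^sub>H * R / \<mu>) * l)"
  proof -
    have "0 \<le> L\<^sub>H * l * R * R * (L / \<mu>)\<^sup>2"
      using R_nonneg LH_nonneg \<open>0 \<le> l\<close> by simp
    then show ?thesis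
      using mu_pos by (simp add: algebra_simps)
  qed
  finally show ?thesis
    using mu_pos by (simp add: l_def)
qed

lemma xstar_deriv_lipschitz:
  assumes "\<beta>1 \<in> std_simplex" "\<beta>2 \<in> std_simplex"
  shows "op_norm_12 (xstar_deriv \<beta>1 - xstar_deriv \<beta>2)
    \<le> 2 * (L / \<mu>)\<^sup>2 * R * (1 + L\<^sub>H * R / \<mu>) * l1norm (\<beta>1 - \<beta>2)"
  by (rule op_norm_12_le[OF xstar_deriv_lipschitz_apply[OF assms]])

end

theorem lemma2:
  fixes f :: "'n::finite \<Rightarrow> real^'d \<Rightarrow> real"
    and grad :: "'n \<Rightarrow> real^'d \<Rightarrow> real^'d"
    and hess :: "'n \<Rightarrow> real^'d \<Rightarrow> real^'d^'d"
    and \<mu> L L\<^sub>H :: real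
  assumes mu_pos: "0 < \<mu>" and mu_le_L: "\<mu> \<le> L"
    and grad: "\<And>i x. (f i has_derivative (\<lambda>h. grad i x \<bullet> h)) (at x)"
    and hess: "\<And>i x. (grad i has_derivative (\<lambda>h. hess i x *v h)) (at x)"
    and hess_bounds: "\<And>i x v. \<mu> * (norm v)\<^sup>2 \<le> v \<bullet> (hess i x *v v) \<and> v \<bullet> (hess i x *v v) \<le> L * (norm v)\<^sup>2"
    and hess_lip: "\<And>i x y. onorm (\<lambda>v. (hess i x - hess i y) *v v) \<le> L\<^sub>H * dist x y"
  shows "(let \<kappa> = L / \<mu>; R = diameter (pareto_set f);
             M\<^sub>0 = \<kappa> * R; M\<^sub>1 = 2 * \<kappa>\<^sup>2 * R * (1 + L\<^sub>H * R / \<mu>) in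
          (\<forall>\<beta>1\<in>std_simplex. \<forall>\<beta>2\<in>std_simplex.
              norm (xstar f \<beta>1 - xstar f \<beta>2) \<le> M\<^sub>0 * l1norm (\<beta>1 - \<beta>2)) \<and>
          (\<exists>D :: real^'n \<Rightarrow> real^'n^'d.
              (\<forall>\<beta>\<in>std_simplex. (xstar f has_derivative (\<lambda>h. D \<beta> *v h)) (at \<beta> within posorth)) \<and>
              (\<forall>\<beta>1\<in>std_simplex. \<forall>\<beta>2\<in>std_simplex.
                  op_norm_12 (D \<beta>1 - D \<beta>2) \<le> M\<^sub>1 * l1norm (\<beta>1 - \<beta>2))))"
proof -
  interpret smooth_strongly_convex_family f grad hess \<mu> L L\<^sub>H
    using assms by unfold_locales
  show ?thesis
    unfolding Let_def
    using xstar_lipschitz has_derivative_xstar xstar_deriv_lipschitz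
    by (intro conjI exI[of _ xstar_deriv]) auto
qed

end
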